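(* For non-negative integers $p_1,p_2$, integers $k_0,k_1,k_2$ and $x_1,x_2,y,z\in\mathbb{C}$, $$\sum_{j_1=0}^{p_1}\sum_{j_2=0}^{p_2}\binom{p_1}{j_1}\binom{p_2}{j_2}B^{(k_1)}_{p_1-j_1}(x_1-y)B^{(k_2)}_{p_2-j_2}(x_2-y)B^{(k_0)}_{j_1+j_2}(y)=\sum_{j_1=0}^{p_1}\sum_{j_2=0}^{p_2}\binom{p_1}{j_1}\binom{p_2}{j_2}B^{(k_1)}_{p_1-j_1}(x_1-z)B^{(k_2)}_{p_2-j_2}(x_2-z)B^{(k_0)}_{j_1+j_2}(z).$$ In particular, for $x\in\mathbb{C}$, $$\sum_{j_1=0}^{p_1}\sum_{j_2=0}^{p_2}\binom{p_1}{j_1}\binom{p_2}{j_2}B^{(k_1)}_{p_1-j_1}B^{(k_2)}_{p_2-j_2}B^{(k_0)}_{j_1+j_2}(x)=\sum_{j_1=0}^{p_1}\sum_{j_2=0}^{p_2}\binom{p_1}{j_1}\binom{p_2}{j_2}B^{(k_1)}_{p_1-j_1}(x)B^{(k_2)}_{p_2-j_2}(x)B^{(k_0)}_{j_1+j_2}.$$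
   Context: For an integer $k$, a non-negative integer $n$ and $x\in\mathbb{C}$, the poly-Bernoulli polynomial is $B_{n}^{(k)}(x)=\sum_{l=0}^{n}\frac{1}{(l+1)^{k}}\sum_{j=0}^{l}(-1)^{j}\binom{l}{j}(j+x)^{n}$, and the poly-Bernoulli number is $B_n^{(k)}=B_n^{(k)}(0)$. *)

theory Defs
  imports Complex_Main
begin

text \<open>Poly-Bernoulli polynomial B_n^(k)(x), for integer k (negative k allowed,
  1/(l+1)^k read as (l+1) powi (-k)).\<close>
definition polyBernPoly :: "int \<Rightarrow> nat \<Rightarrow> complex \<Rightarrow> complex" where
  "polyBernPoly k n x =
     (\<Sum>l=0..n. inverse ((of_nat (l+1) :: complex) powi k) *
        (\<Sum>j=0..l. (-1)^j * of_nat (l choose j) * (of_nat j + x)^n))"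

definition polyBern :: "int \<Rightarrow> nat \<Rightarrow> complex" where
  "polyBern k n = polyBernPoly k n 0"

end

theory Submission
  imports Defs
begin

text \<open>Since the \<open>l\<close>-th forward difference of a polynomial of degree \<open>< l\<close> vanishes, the
  outer sum defining \<open>B_n^(k)(u)\<close> may be extended from \<open>l \<le> n\<close> to \<open>l \<le> N\<close> for any \<open>N \<ge> n\<close>.
  Hence, for all \<open>n \<le> N\<close> at once, \<open>B_n^(k)(u)\<close> is one fixed linear combination of the powers
  \<open>(j + u)^n\<close>. Substituting these expansions, the binomial theorem collapses the double sum to
  a linear combination of the products \<open>(j\<^sub>1 + j\<^sub>0 + x\<^sub>1)^p\<^sub>1 * (j\<^sub>2 + j\<^sub>0 + x\<^sub>2)^p\<^sub>2\<close>,
  from which \<open>y\<close> has cancelled.\<close>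

lemma sum_alternating_choose_mult_index:
  fixes f :: "nat \<Rightarrow> 'a::comm_ring_1"
  shows "(\<Sum>j=0..Suc m. (-1)^j * of_nat (Suc m choose j) * of_nat j * f j)
       = - of_nat (Suc m) * (\<Sum>i=0..m. (-1)^i * of_nat (m choose i) * f (Suc i))"
proof -
  have "(\<Sum>j=0..Suc m. (-1)^j * of_nat (Suc m choose j) * of_nat j * f j)
      = (\<Sum>i=0..m. (-1)^Suc i * of_nat (Suc m choose Suc i) * of_nat (Suc i) * f (Suc i))"
    by (subst sum.atLeast0_atMost_Suc_shift) simp
  also have "\<dots> = (\<Sum>i=0..m. - of_nat (Suc m) * ((-1)^i * of_nat (m choose i) * f (Suc i)))"
  proof (rule sum.cong[OF refl])
    fix i
    have "(of_nat (Suc m choose Suc i) * of_nat (Suc i) :: 'a) = of_nat (Suc m) * of_nat (m choose i)"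
      by (metis Suc_times_binomial_eq mult.commute of_nat_mult)
    then show "(-1)^Suc i * of_nat (Suc m choose Suc i) * of_nat (Suc i) * f (Suc i)
        = - of_nat (Suc m) * ((-1)^i * of_nat (m choose i) * f (Suc i) :: 'a)"
      by (metis (no_types, lifting) mult.assoc mult.left_commute mult_minus_left power_Suc
          mult_minus1)
  qed
  finally show ?thesis by (simp add: sum_distrib_left)
qed

lemma sum_alternating_choose_power_eq_0:
  fixes u :: "'a::comm_ring_1"
  assumes "n < l"
  shows "(\<Sum>j=0..l. (-1)^j * of_nat (l choose j) * (of_nat j + u)^n) = 0"
  using assms
proof (induction n arbitrary: l u)
  case 0
  then show ?case
    using choose_alternating_sum[of l, where 'a='a] by (simp add: atLeast0AtMost)
next
  case (Suc n)
  then obtain m where l: "l = Suc m" and "n < m" by (cases l) auto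
  have vanish: "(\<Sum>j=0..l. (-1)^j * of_nat (l choose j) * (of_nat j + u)^n) = 0"
    using Suc by simp
  have "(\<Sum>j=0..l. (-1)^j * of_nat (l choose j) * (of_nat j + u)^Suc n)
      = (\<Sum>j=0..l. (-1)^j * of_nat (l choose j) * of_nat j * (of_nat j + u)^n)
        + u * (\<Sum>j=0..l. (-1)^j * of_nat (l choose j) * (of_nat j + u)^n)"
    by (simp add: sum_distrib_left sum.distrib[symmetric] algebra_simps)
  also have "\<dots> = - of_nat l * (\<Sum>i=0..m. (-1)^i * of_nat (m choose i) * (of_nat (Suc i) + u)^n)"
    unfolding vanish unfolding l by (simp only: sum_alternating_choose_mult_index) simp
  also have "\<dots> = 0"
    using Suc.IH[of m "u + 1"] \<open>n < m\<close> by (simp add: ac_simps)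
  finally show ?case .
qed

lemma binomial_double_convolution:
  fixes a b g :: "'a::comm_semiring_1"
  shows "(\<Sum>j1=0..p1. \<Sum>j2=0..p2. of_nat (p1 choose j1) * of_nat (p2 choose j2) *
           a^(p1-j1) * b^(p2-j2) * g^(j1+j2)) = (a + g)^p1 * (b + g)^p2"
proof -
  have "(a + g)^p1 * (b + g)^p2 = (\<Sum>j1\<le>p1. of_nat (p1 choose j1) * g^j1 * a^(p1-j1)) *
         (\<Sum>j2\<le>p2. of_nat (p2 choose j2) * g^j2 * b^(p2-j2))"
    by (simp only: add.commute[of a g] add.commute[of b g] binomial_ring)
  also have "\<dots> = (\<Sum>j1=0..p1. \<Sum>j2=0..p2. of_nat (p1 choose j1) * of_nat (p2 choose j2) *
           a^(p1-j1) * b^(p2-j2) * g^(j1+j2))"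
    by (simp add: atLeast0AtMost sum_product power_add mult_ac)
  finally show ?thesis ..
qed

definition binomial_convolution2 ::
    "(nat \<Rightarrow> 'a \<Rightarrow> 'a) \<Rightarrow> (nat \<Rightarrow> 'a \<Rightarrow> 'a) \<Rightarrow> (nat \<Rightarrow> 'a \<Rightarrow> 'a) \<Rightarrow>
     nat \<Rightarrow> nat \<Rightarrow> 'a \<Rightarrow> 'a \<Rightarrow> 'a \<Rightarrow> 'a::comm_ring_1" where
  "binomial_convolution2 P1 P2 P0 p1 p2 x1 x2 y =
     (\<Sum>j1=0..p1. \<Sum>j2=0..p2. of_nat (p1 choose j1) * of_nat (p2 choose j2) *
        P1 (p1 - j1) (x1 - y) * P2 (p2 - j2) (x2 - y) * P0 (j1 + j2) y)"

lemma binomial_convolution2_power_sums: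
  fixes P1 P2 P0 :: "nat \<Rightarrow> 'a \<Rightarrow> 'a::comm_ring_1"
  assumes P1: "\<And>n u. n \<le> p1 + p2 \<Longrightarrow> P1 n u = (\<Sum>i\<in>I1. c1 i * (t1 i + u)^n)"
    and P2: "\<And>n u. n \<le> p1 + p2 \<Longrightarrow> P2 n u = (\<Sum>i\<in>I2. c2 i * (t2 i + u)^n)"
    and P0: "\<And>n u. n \<le> p1 + p2 \<Longrightarrow> P0 n u = (\<Sum>i\<in>I0. c0 i * (t0 i + u)^n)"
  shows "binomial_convolution2 P1 P2 P0 p1 p2 x1 x2 y =
    (\<Sum>i1\<in>I1. \<Sum>i2\<in>I2. \<Sum>i0\<in>I0. c1 i1 * c2 i2 * c0 i0 *
       (t1 i1 + t0 i0 + x1)^p1 * (t2 i2 + t0 i0 + x2)^p2)"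
proof -
  define F where "F j1 j2 i1 i2 i0 = c1 i1 * c2 i2 * c0 i0 *
     (of_nat (p1 choose j1) * of_nat (p2 choose j2) *
      (t1 i1 + (x1 - y))^(p1-j1) * (t2 i2 + (x2 - y))^(p2-j2) * (t0 i0 + y)^(j1+j2))"
    for j1 j2 i1 i2 i0
  have "binomial_convolution2 P1 P2 P0 p1 p2 x1 x2 y =
      (\<Sum>j1=0..p1. \<Sum>j2=0..p2. \<Sum>i1\<in>I1. \<Sum>i2\<in>I2. \<Sum>i0\<in>I0. F j1 j2 i1 i2 i0)"
    unfolding binomial_convolution2_def F_def
    by (intro sum.cong refl)
      (simp add: P1 P2 P0 sum_distrib_left sum_distrib_right mult_ac)
  also have "\<dots> = (\<Sum>i1\<in>I1. \<Sum>i2\<in>I2. \<Sum>i0\<in>I0. \<Sum>j1=0..p1. \<Sum>j2=0..p2. F j1 j2 i1 i2 i0)"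
    by (simp only: sum.swap[of _ "{0..p1}" I1] sum.swap[of _ "{0..p1}" I2] sum.swap[of _ "{0..p1}" I0]
        sum.swap[of _ "{0..p2}" I1] sum.swap[of _ "{0..p2}" I2] sum.swap[of _ "{0..p2}" I0])
  also have "\<dots> = (\<Sum>i1\<in>I1. \<Sum>i2\<in>I2. \<Sum>i0\<in>I0. c1 i1 * c2 i2 * c0 i0 *
       (t1 i1 + t0 i0 + x1)^p1 * (t2 i2 + t0 i0 + x2)^p2)"
    unfolding F_def
    by (simp only: sum_distrib_left[symmetric] binomial_double_convolution)
      (simp add: algebra_simps)
  finally show ?thesis .
qed

corollary binomial_convolution2_shift_invariant:
  fixes P1 P2 P0 :: "nat \<Rightarrow> 'a \<Rightarrow> 'a::comm_ring_1"
  assumes "\<And>n u. n \<le> p1 + p2 \<Longrightarrow> P1 n u = (\<Sum>i\<in>I1. c1 i * (t1 i + u)^n)"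
    and "\<And>n u. n \<le> p1 + p2 \<Longrightarrow> P2 n u = (\<Sum>i\<in>I2. c2 i * (t2 i + u)^n)"
    and "\<And>n u. n \<le> p1 + p2 \<Longrightarrow> P0 n u = (\<Sum>i\<in>I0. c0 i * (t0 i + u)^n)"
  shows "binomial_convolution2 P1 P2 P0 p1 p2 x1 x2 y = binomial_convolution2 P1 P2 P0 p1 p2 x1 x2 z"
  using binomial_convolution2_power_sums[OF assms] by (simp only:)

definition polyBern_weight :: "int \<Rightarrow> nat \<Rightarrow> nat \<Rightarrow> complex" where
  "polyBern_weight k l j = inverse ((of_nat (l+1) :: complex) powi k) * (-1)^j * of_nat (l choose j)"

lemma polyBernPoly_eq_power_sum:
  assumes "n \<le> N"
  shows "polyBernPoly k n u =
    (\<Sum>i\<in>Sigma {0..N} (\<lambda>l. {0..l}). polyBern_weight k (fst i) (snd i) * (of_nat (snd i) + u)^n)"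
proof -
  have "polyBernPoly k n u = (\<Sum>l=0..N. inverse ((of_nat (l+1) :: complex) powi k) *
        (\<Sum>j=0..l. (-1)^j * of_nat (l choose j) * (of_nat j + u)^n))"
    unfolding polyBernPoly_def
    by (rule sum.mono_neutral_left) (use assms in \<open>auto simp: sum_alternating_choose_power_eq_0\<close>)
  also have "\<dots> = (\<Sum>l=0..N. \<Sum>j=0..l. polyBern_weight k l j * (of_nat j + u)^n)"
    by (simp add: polyBern_weight_def sum_distrib_left mult.assoc)
  finally show ?thesis
    by (simp add: sum.Sigma split_def)
qed

theorem mainTheorem10:
  fixes p1 p2 :: nat and k0 k1 k2 :: int and x1 x2 y z x :: complex
  shows "((\<Sum>j1=0..p1. \<Sum>j2=0..p2. of_nat (p1 choose j1) * of_nat (p2 choose j2) *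
            polyBernPoly k1 (p1 - j1) (x1 - y) * polyBernPoly k2 (p2 - j2) (x2 - y) *
            polyBernPoly k0 (j1 + j2) y)
       = (\<Sum>j1=0..p1. \<Sum>j2=0..p2. of_nat (p1 choose j1) * of_nat (p2 choose j2) *
            polyBernPoly k1 (p1 - j1) (x1 - z) * polyBernPoly k2 (p2 - j2) (x2 - z) *
            polyBernPoly k0 (j1 + j2) z)) \<and>
         ((\<Sum>j1=0..p1. \<Sum>j2=0..p2. of_nat (p1 choose j1) * of_nat (p2 choose j2) *
            polyBern k1 (p1 - j1) * polyBern k2 (p2 - j2) * polyBernPoly k0 (j1 + j2) x)
       = (\<Sum>j1=0..p1. \<Sum>j2=0..p2. of_nat (p1 choose j1) * of_nat (p2 choose j2) *
            polyBernPoly k1 (p1 - j1) x * polyBernPoly k2 (p2 - j2) x * polyBern k0 (j1 + j2)))"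
proof -
  have shift: "binomial_convolution2 (polyBernPoly k1) (polyBernPoly k2) (polyBernPoly k0) p1 p2 a b c
      = binomial_convolution2 (polyBernPoly k1) (polyBernPoly k2) (polyBernPoly k0) p1 p2 a b c'"
    for a b c c'
    by (rule binomial_convolution2_shift_invariant) (rule polyBernPoly_eq_power_sum, assumption)+
  from shift[of x1 x2 y z] shift[of x x x 0] show ?thesis
    by (simp add: binomial_convolution2_def polyBern_def)
qed

end
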